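(* In the setting below, let $(m_j)_{j\in\mathbb{N}}$ be a strictly increasing sequence of natural numbers and $(\rho_j)_{j\in\mathbb{N}}$ a sequence of strictly positive reals. Suppose (1) there exists $K\ge 0$ such that $\mathbb{P}_X(S_{\rho_j})\le K\,\mathbb{P}_X(B_{\rho_j})$ for all $j$, and (2) $m_j\,\mathbb{P}_X(\bar B_{\rho_j})\to\infty$ as $j\to\infty$. Then $$\mathbb{E}\big[\mathbb{I}_{S_{\rho_j}}(X^x_{m_j})|\eta(X^x_{m_j})-\eta(x)|\big]\to 0\quad\text{as } j\to\infty.$$
   Context: Let $(\mathcal{X},d)$ be a metric space with its Borel $\sigma$-algebra, let $(\Omega,\mathcal{F},\mathbb{P})$ be a probability space, and let $X,X_1,X_2,\dots$ be i.i.d. $\mathcal{X}$-valued random variables with common law $\mathbb{P}_X$. For $x\in\mathcal{X}$ and $r>0$ write $B_r=\{x':d(x,x')<r\}$, $\bar B_r=\{x':d(x,x')\le r\}$ and $S_r=\{x':d(x,x')=r\}$. The support of $\mathbb{P}_X$ is the set of $x$ such that $\mathbb{P}_X(\bar B_r(x))>0$ for all $r>0$. Fix $x$ in the support of $\mathbb{P}_X$ and a bounded measurable $\eta:\mathcal{X}\to\mathbb{R}$. For each $m\in\mathbb{N}$, a nearest neighbor of $x$ among $X_1,\dots,X_m$ is a measurable $X^x_m:\Omega\to\mathcal{X}$ with $X^x_m(\omega)\in\arg\min_{x'\in\{X_1(\omega),\dots,X_m(\omega)\}}d(x,x')$ for every $\omega\in\Omega$; fix such a sequence $(X^x_m)_{m\in\mathbb{N}}$.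 *)

theory Defs
  imports "HOL-Probability.Probability"
begin

end

theory Submission
  imports Defs
begin

text \<open>If the nearest neighbour of \<open>x\<close> among \<open>X\<^sub>1, \<dots>, X\<^sub>m\<close> lies on the sphere \<open>S\<^sub>\<rho>\<close>, then no
  sample point falls into the open ball \<open>B\<^sub>\<rho>\<close>; by independence this has probability
  \<open>(1 - P(B\<^sub>\<rho>))\<^sup>m \<le> exp (- m P(B\<^sub>\<rho>))\<close>. Condition (1) gives \<open>P(cball x \<rho>) \<le> (1 + K) P(B\<^sub>\<rho>)\<close>,
  so condition (2) forces \<open>m\<^sub>j P(B\<^sub>\<rho>\<^sub>j) \<rightarrow> \<infinity>\<close>. Since \<open>\<eta>\<close> is bounded, the expectation is at
  most \<open>2 sup |\<eta>|\<close> times that probability and therefore tends to \<open>0\<close>.\<close>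

lemma closed_sphere_metric: "closed (sphere (a::'a::metric_space) r)"
proof -
  have "sphere a r = cball a r - ball a r" by auto
  then show ?thesis by (simp add: closed_Diff)
qed

lemma measure_cball_le_ball_plus_sphere:
  fixes D :: "'a::metric_space measure"
  assumes "sets D = sets borel" "finite_measure D"
  shows "measure D (cball x r) \<le> measure D (ball x r) + measure D (sphere x r)"
proof -
  have "cball x r = ball x r \<union> sphere x r" by auto
  then show ?thesis
    using assms measure_Un_le[of "ball x r" D "sphere x r"] closed_sphere_metric
    by (metis borel_closed borel_open open_ball)
qed

lemma filterlim_at_top_if_dominates:
  fixes f g :: "'b \<Rightarrow> real"
  assumes "filterlim f at_top F" "C > 0" "\<And>y. f y \<le> C * g y"
  shows "filterlim g at_top F"
proof (rule filterlim_at_top_mono)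
  show "filterlim (\<lambda>y. (1 / C) * f y) at_top F"
    using assms(1,2) by (intro filterlim_tendsto_pos_mult_at_top[OF tendsto_const]) auto
  show "\<forall>\<^sub>F y in F. (1 / C) * f y \<le> g y"
    using assms(2,3) by (intro always_eventually) (simp add: field_simps mult.commute)
qed

lemma ball_mass_tendsto_at_top:
  fixes P :: "'a::metric_space measure" and m :: "nat \<Rightarrow> nat"
  assumes sets_P: "sets P = sets borel" and fin: "finite_measure P" and K: "K \<ge> 0"
    and sphere_le: "\<And>j. measure P (sphere x (\<rho> j)) \<le> K * measure P (ball x (\<rho> j))"
    and lim: "filterlim (\<lambda>j. real (m j) * measure P (cball x (\<rho> j))) at_top sequentially"
  shows "filterlim (\<lambda>j. real (m j) * measure P (ball x (\<rho> j))) at_top sequentially"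
proof (rule filterlim_at_top_if_dominates[OF lim])
  fix j
  have "measure P (cball x (\<rho> j)) \<le> (1 + K) * measure P (ball x (\<rho> j))"
    using measure_cball_le_ball_plus_sphere[OF sets_P fin, of x "\<rho> j"] sphere_le[of j]
    by (simp add: distrib_right)
  then show "real (m j) * measure P (cball x (\<rho> j)) \<le> (1 + K) * (real (m j) * measure P (ball x (\<rho> j)))"
    by (metis mult.left_commute mult_left_mono of_nat_0_le_iff)
qed (use K in simp)

lemma (in prob_space) prob_all_in_iid:
  assumes indep: "indep_vars (\<lambda>_. N) Xs I"
    and ident: "\<And>i. i \<in> J \<Longrightarrow> distr M N (Xs i) = D"
    and A: "A \<in> sets N"
    and J: "finite J" "J \<noteq> {}" "J \<subseteq> I"
  shows "prob {\<omega>\<in>space M. \<forall>i\<in>J. Xs i \<omega> \<in> A} = measure D A ^ card J"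
proof -
  have rv: "Xs i \<in> M \<rightarrow>\<^sub>M N" if "i \<in> I" for i
    using indep that unfolding indep_vars_def2 by auto
  have ind: "indep_sets (\<lambda>i. {Xs i -` A \<inter> space M | A. A \<in> sets N}) I"
    using indep unfolding indep_vars_def2 by auto
  have "{\<omega>\<in>space M. \<forall>i\<in>J. Xs i \<omega> \<in> A} = (\<Inter>i\<in>J. Xs i -` A \<inter> space M)"
    using J(2) by auto
  also have "prob \<dots> = (\<Prod>i\<in>J. prob (Xs i -` A \<inter> space M))"
    using J A by (intro indep_setsD[OF ind]) auto
  also have "\<dots> = (\<Prod>i\<in>J. measure D A)"
  proof (rule prod.cong[OF refl])
    fix i assume "i \<in> J"
    then show "prob (Xs i -` A \<inter> space M) = measure D A"
      using J(3) A rv[of i] ident[of i] by (auto simp: measure_distr)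
  qed
  finally show ?thesis by simp
qed

lemma (in prob_space) prob_nearest_neighbour_on_sphere_le:
  fixes Xs :: "nat \<Rightarrow> 'a \<Rightarrow> 'b::metric_space"
  assumes indep: "indep_vars (\<lambda>_. borel) Xs I"
    and ident: "\<And>i. i \<in> J \<Longrightarrow> distr M borel (Xs i) = D"
    and J: "finite J" "J \<noteq> {}" "J \<subseteq> I"
    and Y_min: "\<And>\<omega> i. \<omega> \<in> space M \<Longrightarrow> i \<in> J \<Longrightarrow> dist x (Y \<omega>) \<le> dist x (Xs i \<omega>)"
  shows "prob {\<omega>\<in>space M. Y \<omega> \<in> sphere x r} \<le> (1 - measure D (ball x r)) ^ card J"
proof -
  obtain i where i: "i \<in> J" using J(2) by blast
  have rv: "Xs i \<in> M \<rightarrow>\<^sub>M borel"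
    using indep i J(3) unfolding indep_vars_def2 by auto
  interpret D: prob_space D
    using prob_space_distr[OF rv] ident[OF i] by simp
  have space_D: "space D = UNIV" and sets_D: "sets D = sets borel"
    using ident[OF i] by auto
  have "{\<omega>\<in>space M. Y \<omega> \<in> sphere x r} \<subseteq> {\<omega>\<in>space M. \<forall>i\<in>J. Xs i \<omega> \<in> - ball x r}"
    using Y_min by fastforce
  moreover have "{\<omega>\<in>space M. Xs j \<omega> \<in> - ball x r} \<in> events" if "j \<in> J" for j
  proof -
    have "Xs j \<in> M \<rightarrow>\<^sub>M borel"
      using indep that J(3) unfolding indep_vars_def2 by auto
    then show ?thesis
      using measurable_sets[of "Xs j" M borel "- ball x r"] by (simp add: vimage_def Int_def conj_commute)
  qed
  ultimately have "prob {\<omega>\<in>space M. Y \<omega> \<in> sphere x r} \<le> prob {\<omega>\<in>space M. \<forall>i\<in>J. Xs i \<omega> \<in> - ball x r}"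
    using J(1) by (intro finite_measure_mono sets.sets_Collect_finite_All) auto
  also have "\<dots> = measure D (- ball x r) ^ card J"
    using J by (intro prob_all_in_iid[OF indep ident]) auto
  also have "measure D (- ball x r) = 1 - measure D (ball x r)"
    using D.prob_compl[of "ball x r"] space_D sets_D by (simp add: Compl_eq_Diff_UNIV)
  finally show ?thesis .
qed

lemma (in prob_space) expectation_indicator_mult_le:
  assumes Y: "Y \<in> M \<rightarrow>\<^sub>M N" and S: "S \<in> sets N" and g: "g \<in> borel_measurable N"
    and g_bounds: "\<And>y. 0 \<le> g y" "\<And>y. g y \<le> C"
  shows "expectation (\<lambda>\<omega>. indicator S (Y \<omega>) * g (Y \<omega>)) \<le> C * prob {\<omega>\<in>space M. Y \<omega> \<in> S}"
proof -
  let ?E = "{\<omega>\<in>space M. Y \<omega> \<in> S}"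
  have C: "0 \<le> C"
    using order_trans[OF g_bounds] .
  have E: "?E \<in> events"
    using measurable_sets[OF Y S] by (simp add: vimage_def Int_def conj_commute)
  have "expectation (\<lambda>\<omega>. indicator S (Y \<omega>) * g (Y \<omega>)) \<le> expectation (\<lambda>\<omega>. C * indicator ?E \<omega>)"
  proof (rule integral_mono)
    show "integrable M (\<lambda>\<omega>. indicator S (Y \<omega>) * g (Y \<omega>))"
      using Y S g g_bounds C
      by (intro integrable_const_bound[where B=C]) (auto simp: indicator_def)
    show "integrable M (\<lambda>\<omega>. C * indicator ?E \<omega>)"
      using E by (intro integrable_mult_right integrable_real_indicator) (auto simp: less_top[symmetric])
  qed (use g_bounds C in \<open>auto simp: indicator_def\<close>)
  also have "\<dots> = C * prob ?E"
    using E by simp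
  finally show ?thesis .
qed

lemma (in prob_space) expectation_nearest_neighbour_on_sphere_le:
  fixes Xs :: "nat \<Rightarrow> 'a \<Rightarrow> 'b::metric_space"
  assumes indep: "indep_vars (\<lambda>_. borel) Xs I"
    and ident: "\<And>i. i \<in> J \<Longrightarrow> distr M borel (Xs i) = D" and D: "prob_space D"
    and J: "finite J" "J \<noteq> {}" "J \<subseteq> I"
    and Y_meas: "Y \<in> M \<rightarrow>\<^sub>M borel"
    and Y_min: "\<And>\<omega> i. \<omega> \<in> space M \<Longrightarrow> i \<in> J \<Longrightarrow> dist x (Y \<omega>) \<le> dist x (Xs i \<omega>)"
    and g: "g \<in> borel_measurable borel" "\<And>y. 0 \<le> g y" "\<And>y. g y \<le> C"
  shows "expectation (\<lambda>\<omega>. indicator (sphere x r) (Y \<omega>) * g (Y \<omega>))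
           \<le> C * exp (- (real (card J) * measure D (ball x r)))"
proof -
  have C: "0 \<le> C"
    using order_trans[OF g(2,3)] .
  have J_pos: "card J > 0"
    using J by (simp add: card_gt_0_iff)
  have "expectation (\<lambda>\<omega>. indicator (sphere x r) (Y \<omega>) * g (Y \<omega>))
          \<le> C * prob {\<omega>\<in>space M. Y \<omega> \<in> sphere x r}"
    using g borel_closed[OF closed_sphere_metric] by (intro expectation_indicator_mult_le[OF Y_meas]) auto
  also have "\<dots> \<le> C * (1 - measure D (ball x r)) ^ card J"
    using prob_nearest_neighbour_on_sphere_le[OF indep ident J Y_min] C
    by (intro mult_left_mono) auto
  also have "\<dots> \<le> C * exp (- (real (card J) * measure D (ball x r)))"
    using exp_ge_one_minus_x_over_n_power_n[of "real (card J) * measure D (ball x r)" "card J"]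
      J_pos C prob_space.prob_le_1[OF D]
    by (intro mult_left_mono) auto
  finally show ?thesis .
qed

theorem mainTheorem7:
  fixes M :: "'m measure"
    and X :: "'m \<Rightarrow> 'a::metric_space"
    and Xs :: "nat \<Rightarrow> 'm \<Rightarrow> 'a"
    and x :: 'a
    and \<eta> :: "'a \<Rightarrow> real"
    and NN :: "nat \<Rightarrow> 'm \<Rightarrow> 'a"
    and mj :: "nat \<Rightarrow> nat"
    and \<rho> :: "nat \<Rightarrow> real"
  assumes prob: "prob_space M"
    and X_meas: "X \<in> M \<rightarrow>\<^sub>M borel"
    and indep: "prob_space.indep_vars M (\<lambda>_. borel) Xs {1..}"
    and ident: "\<And>i. i \<ge> 1 \<Longrightarrow> distr M borel (Xs i) = distr M borel X"
    and supp: "\<And>r. r > 0 \<Longrightarrow> measure (distr M borel X) (cball x r) > 0"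
    and eta_meas: "\<eta> \<in> borel_measurable borel"
    and eta_bdd: "bounded (range \<eta>)"
    and NN_meas: "\<And>m. NN m \<in> M \<rightarrow>\<^sub>M borel"
    and NN_in: "\<And>m \<omega>. m \<ge> 1 \<Longrightarrow> \<omega> \<in> space M \<Longrightarrow> NN m \<omega> \<in> (\<lambda>i. Xs i \<omega>) ` {1..m}"
    and NN_min: "\<And>m \<omega> i. m \<ge> 1 \<Longrightarrow> \<omega> \<in> space M \<Longrightarrow> i \<in> {1..m} \<Longrightarrow>
                   dist x (NN m \<omega>) \<le> dist x (Xs i \<omega>)"
    and mj_mono: "strict_mono mj"
    and rho_pos: "\<And>j. \<rho> j > 0"
    and cond1: "\<exists>K\<ge>0. \<forall>j. measure (distr M borel X) (sphere x (\<rho> j))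
                   \<le> K * measure (distr M borel X) (ball x (\<rho> j))"
    and cond2: "filterlim (\<lambda>j. real (mj j) * measure (distr M borel X) (cball x (\<rho> j))) at_top sequentially"
  shows "(\<lambda>j. integral\<^sup>L M (\<lambda>\<omega>. indicator (sphere x (\<rho> j)) (NN (mj j) \<omega>)
              * \<bar>\<eta> (NN (mj j) \<omega>) - \<eta> x\<bar>)) \<longlonglongrightarrow> 0"
proof -
  interpret prob_space M by (rule prob)
  define P where "P = distr M borel X"
  interpret P: prob_space P unfolding P_def by (rule prob_space_distr[OF X_meas])
  define p where "p j = measure P (ball x (\<rho> j))" for j
  obtain K where "K \<ge> 0" "\<And>j. measure P (sphere x (\<rho> j)) \<le> K * p j"
    using cond1 unfolding P_def p_def by auto
  then have "filterlim (\<lambda>j. real (mj j) * p j) at_top sequentially"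
    using ball_mass_tendsto_at_top[of P, OF _ P.finite_measure_axioms] cond2
    unfolding P_def p_def by simp
  then have bound_lim: "(\<lambda>j. 2 * B * exp (- (real (mj j) * p j))) \<longlonglongrightarrow> 0" for B
    by (intro tendsto_mult_right_zero filterlim_compose[OF exp_at_bot])
      (simp add: filterlim_uminus_at_top)
  obtain B where B: "\<And>y. \<bar>\<eta> y\<bar> \<le> B" using eta_bdd unfolding bounded_iff by auto
  have "integral\<^sup>L M (\<lambda>\<omega>. indicator (sphere x (\<rho> j)) (NN (mj j) \<omega>) * \<bar>\<eta> (NN (mj j) \<omega>) - \<eta> x\<bar>)
          \<le> 2 * B * exp (- (real (mj j) * p j))" if "j \<ge> 1" for j
  proof -
    have "mj j \<ge> 1"
      using strict_mono_imp_increasing[OF mj_mono, of j] that by simp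
    have "integral\<^sup>L M (\<lambda>\<omega>. indicator (sphere x (\<rho> j)) (NN (mj j) \<omega>) * \<bar>\<eta> (NN (mj j) \<omega>) - \<eta> x\<bar>)
            \<le> 2 * B * exp (- (real (card {1..mj j}) * p j))"
      unfolding p_def
    proof (rule expectation_nearest_neighbour_on_sphere_le[OF indep _ P.prob_space_axioms])
      show "\<bar>\<eta> y - \<eta> x\<bar> \<le> 2 * B" for y
        using B[of y] B[of x] by linarith
    qed (use ident NN_meas NN_min eta_meas \<open>mj j \<ge> 1\<close> in \<open>auto simp: P_def\<close>)
    then show ?thesis by simp
  qed
  then show ?thesis
    by (intro tendsto_sandwich[OF _ _ tendsto_const bound_lim])
      (auto simp: eventually_sequentially intro!: integral_nonneg_AE)
qed

end
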